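(* Let $q=p^k$ be a power of a prime $p$, $m\ge1$, and let $U_2$ act on $\mathbb{F}_q[x,y]$ fixing $x$ and sending $y\mapsto y+ax$, $a\in\mathbb{F}_q$. Put $V_2=y^q-yx^{q-1}$. Then the images in $Q(m,2)=\mathbb{F}_q[x,y]/(x^{q^m},y^{q^m})$ of the following two families of polynomials form an $\mathbb{F}_q$-basis of $Q(m,2)^{U_2}$: (1) $x^iy^j$ with $0\le i\le q^m-1$, $0\le j\le q^m-1$, $q\nmid j$, and $i+p^{v_p(j)}\ge q^m$; (2) $x^aV_2^b$ with $0\le a\le q^m-1$ and $0\le b\le q^{m-1}-1$.
   Context: $v_p(j)$ denotes the $p$-adic valuation of the positive integer $j$. $U_2\subset GL_2(\mathbb{F}_q)$ is the group of upper triangular matrices with diagonal entries $1$, acting on $\mathbb{F}_q[x,y]$ (with $x=x_1$, $y=x_2$) via $\sigma(x_j)=\sum_i\sigma_{ij}x_i$, and the action descends to $Q(m,2)$; $Q(m,2)^{U_2}$ is the subring of fixed elements. *)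

theory Defs
  imports "HOL-Computational_Algebra.Computational_Algebra"
begin

text \<open>Elements of Q(m,2) = F[x,y]/(x^N, y^N), N = q^m, are represented by their
  coefficient arrays: f (i,j) is the coefficient of x^i y^j, with i,j < N.\<close>

definition qcarrier :: "nat \<Rightarrow> (nat \<times> nat \<Rightarrow> 'a::zero) set" where
  "qcarrier N = {f. \<forall>i j. (N \<le> i \<or> N \<le> j) \<longrightarrow> f (i, j) = 0}"

definition qzero :: "nat \<times> nat \<Rightarrow> 'a::zero" where
  "qzero = (\<lambda>_. 0)"

definition qadd :: "(nat \<times> nat \<Rightarrow> 'a::plus) \<Rightarrow> (nat \<times> nat \<Rightarrow> 'a) \<Rightarrow> nat \<times> nat \<Rightarrow> 'a" where
  "qadd f g = (\<lambda>ij. f ij + g ij)"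

definition qscale :: "'a::times \<Rightarrow> (nat \<times> nat \<Rightarrow> 'a) \<Rightarrow> nat \<times> nat \<Rightarrow> 'a" where
  "qscale c f = (\<lambda>ij. c * f ij)"

definition qmono :: "nat \<Rightarrow> nat \<Rightarrow> nat \<Rightarrow> nat \<times> nat \<Rightarrow> 'a::{zero,one}" where
  "qmono N i j = (\<lambda>(i', j'). if i' = i \<and> j' = j \<and> i < N \<and> j < N then 1 else 0)"

definition qmul :: "nat \<Rightarrow> (nat \<times> nat \<Rightarrow> 'a::comm_ring_1) \<Rightarrow> (nat \<times> nat \<Rightarrow> 'a) \<Rightarrow> nat \<times> nat \<Rightarrow> 'a" where
  "qmul N f g = (\<lambda>(i, j). if i < N \<and> j < N
       then (\<Sum>i1\<le>i. \<Sum>j1\<le>j. f (i1, j1) * g (i - i1, j - j1)) else 0)"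

fun qpow :: "nat \<Rightarrow> (nat \<times> nat \<Rightarrow> 'a::comm_ring_1) \<Rightarrow> nat \<Rightarrow> nat \<times> nat \<Rightarrow> 'a" where
  "qpow N f 0 = qmono N 0 0"
| "qpow N f (Suc n) = qmul N f (qpow N f n)"

abbreviation qX :: "nat \<Rightarrow> nat \<times> nat \<Rightarrow> 'a::comm_ring_1" where
  "qX N \<equiv> qmono N 1 0"

abbreviation qY :: "nat \<Rightarrow> nat \<times> nat \<Rightarrow> 'a::comm_ring_1" where
  "qY N \<equiv> qmono N 0 1"

definition qact :: "nat \<Rightarrow> 'a::comm_ring_1 \<Rightarrow> (nat \<times> nat \<Rightarrow> 'a) \<Rightarrow> nat \<times> nat \<Rightarrow> 'a" where
  "qact N a f = (\<lambda>ij. \<Sum>i<N. \<Sum>j<N.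
       f (i, j) * qmul N (qpow N (qX N) i) (qpow N (qadd (qY N) (qscale a (qX N))) j) ij)"

definition qinvariants :: "nat \<Rightarrow> (nat \<times> nat \<Rightarrow> 'a::comm_ring_1) set" where
  "qinvariants N = {f \<in> qcarrier N. \<forall>a. qact N a f = f}"

definition qV2 :: "nat \<Rightarrow> nat \<Rightarrow> nat \<times> nat \<Rightarrow> 'a::comm_ring_1" where
  "qV2 N q = qadd (qpow N (qY N) q) (qscale (-1) (qmul N (qY N) (qpow N (qX N) (q - 1))))"

definition qlincomb :: "'i set \<Rightarrow> ('i \<Rightarrow> 'a::comm_ring_1) \<Rightarrow> ('i \<Rightarrow> nat \<times> nat \<Rightarrow> 'a) \<Rightarrow> nat \<times> nat \<Rightarrow> 'a" where
  "qlincomb I u B = (\<lambda>ij. \<Sum>t\<in>I. u t * B t ij)"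

definition is_basis_of :: "'i set \<Rightarrow> ('i \<Rightarrow> nat \<times> nat \<Rightarrow> 'a::comm_ring_1) \<Rightarrow> (nat \<times> nat \<Rightarrow> 'a) set \<Rightarrow> bool" where
  "is_basis_of I B S \<longleftrightarrow> finite I \<and> (\<forall>t\<in>I. B t \<in> S)
     \<and> (\<forall>u. qlincomb I u B = qzero \<longrightarrow> (\<forall>t\<in>I. u t = 0))
     \<and> (\<forall>f\<in>S. \<exists>u. f = qlincomb I u B)"

end

(*
  The unipotent
  element a acts by the substitution y := y + a x, which commutes with truncation as long as the
  y-degree stays below N.

  In characteristic p, (y + a x)^d = y^d + a^d x^d for d = p^v(j), so x^i y^j moves
  only by multiples of x^(i+d), which vanish in Q(m,2) when i + d >= N. Likewise
  V_2 = y^q - y x^(q-1) is fixed by the substitution because a^q = a on F_q.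

  Let f be invariant with top y-degree j, q not dividing j, and x^i y^j a term of f.
  With d = p^v(j) < q, the coefficient of x^(i+d) y^(j-d) in the image of f under a is a
  polynomial in a of degree at most d < q with a^d-coefficient (j choose d) f(i,j), and
  (j choose d) is nonzero mod p. Invariance makes this polynomial constant on all q points of F_q,
  so i + d < N is impossible. Hence the top row of every invariant is a combination of the
  leading terms x^i y^j of family (1) and x^a y^(qb) of x^a V_2^b; since those families have
  distinct leading terms with nothing else on their top row, triangular elimination shows they
  form a basis.
*)
theory Submission
  imports Defs
begin

section \<open>Truncated bivariate polynomials\<close>

text \<open>A bivariate polynomial is an \<^typ>\<open>'a poly poly\<close> with outer variable y and inner variable x:
  \<^term>\<open>coeff (coeff P j) i\<close> is the coefficient of x^i y^j.\<close>

definition qtrunc :: "nat \<Rightarrow> 'a::zero poly poly \<Rightarrow> nat \<times> nat \<Rightarrow> 'a" where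
  "qtrunc N P = (\<lambda>(i, j). if i < N \<and> j < N then coeff (coeff P j) i else 0)"

definition y_plus_ax :: "'a::comm_ring_1 \<Rightarrow> 'a poly poly" where
  "y_plus_ax a = [:[:0, a:], 1:]"

lemma y_plus_ax_eq: "y_plus_ax a = monom 1 1 + [:monom a 1:]"
  by (simp add: y_plus_ax_def monom_Suc monom_0 one_pCons)

lemma qtrunc_in_qcarrier: "qtrunc N P \<in> qcarrier N"
  by (auto simp: qcarrier_def qtrunc_def)

lemma qtrunc_sum: "qtrunc N (sum g A) ij = (\<Sum>x\<in>A. qtrunc N (g x) ij)"
  by (cases ij) (auto simp: qtrunc_def coeff_sum)

lemma qtrunc_add: "qtrunc N (P + Q) ij = qtrunc N P ij + qtrunc N Q ij"
  by (cases ij) (simp add: qtrunc_def)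

lemma qtrunc_smult_monom_eq_0: "N \<le> i \<Longrightarrow> qtrunc N (smult (monom c i) P) ij = 0"
  by (cases ij) (auto simp: qtrunc_def coeff_monom_mult)

lemma qmono_eq_qtrunc: "qmono N i j = qtrunc N (monom (monom 1 i) j)"
  by (auto simp: qmono_def qtrunc_def)

lemma qadd_qtrunc: "qadd (qtrunc N P) (qtrunc N Q) = qtrunc N (P + Q)"
  by (auto simp: qadd_def qtrunc_def)

lemma qscale_qtrunc: "qscale c (qtrunc N P) = qtrunc N (smult [:c:] P)"
  by (auto simp: qscale_def qtrunc_def)

lemma qmul_qtrunc: "qmul N (qtrunc N P) (qtrunc N Q) = qtrunc N (P * Q)"
proof -
  have "(\<Sum>i1\<le>i. \<Sum>j1\<le>j. qtrunc N P (i1, j1) * qtrunc N Q (i - i1, j - j1))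
      = coeff (coeff (P * Q) j) i" if "i < N" "j < N" for i j
  proof -
    have "(\<Sum>i1\<le>i. \<Sum>j1\<le>j. qtrunc N P (i1, j1) * qtrunc N Q (i - i1, j - j1))
        = (\<Sum>i1\<le>i. \<Sum>j1\<le>j. coeff (coeff P j1) i1 * coeff (coeff Q (j - j1)) (i - i1))"
      using that by (intro sum.cong refl) (auto simp: qtrunc_def)
    also have "\<dots> = (\<Sum>j1\<le>j. \<Sum>i1\<le>i. coeff (coeff P j1) i1 * coeff (coeff Q (j - j1)) (i - i1))"
      by (rule sum.swap)
    also have "\<dots> = coeff (coeff (P * Q) j) i"
      by (simp add: coeff_mult coeff_sum)
    finally show ?thesis .
  qed
  then show ?thesis
    by (auto simp: qmul_def qtrunc_def)
qed

lemma qpow_qtrunc: "qpow N (qtrunc N P) n = qtrunc N (P ^ n)"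
  by (induction n) (simp_all add: qmul_qtrunc qmono_eq_qtrunc flip: one_pCons)

lemma qX_eq_qtrunc: "qX N = qtrunc N [:monom 1 1:]"
  by (simp add: qmono_eq_qtrunc monom_0)

lemma qY_eq_qtrunc: "qY N = qtrunc N (monom 1 1)"
  by (simp add: qmono_eq_qtrunc flip: one_pCons monom_0)

lemma qX_pow_eq_qtrunc: "qpow N (qX N) i = qtrunc N [:monom 1 i:]"
  unfolding qX_eq_qtrunc qpow_qtrunc by (simp add: monom_power flip: monom_0)

lemma y_plus_ax_eq_qtrunc: "qadd (qY N) (qscale a (qX N)) = qtrunc N (y_plus_ax a)"
  unfolding qX_eq_qtrunc qY_eq_qtrunc qscale_qtrunc qadd_qtrunc by (simp add: y_plus_ax_eq smult_monom)

lemma qact_eq_qtrunc_sum: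
  "qact N a f = qtrunc N (\<Sum>i<N. \<Sum>j<N. smult (monom (f (i, j)) i) (y_plus_ax a ^ j))"
proof -
  have "f (i, j) * qmul N (qpow N (qX N) i) (qpow N (qadd (qY N) (qscale a (qX N))) j) ij
      = qtrunc N (smult (monom (f (i, j)) i) (y_plus_ax a ^ j)) ij" for i j ij
    unfolding qX_pow_eq_qtrunc y_plus_ax_eq_qtrunc qpow_qtrunc qmul_qtrunc
    by (cases ij) (simp add: qtrunc_def coeff_monom_mult)
  then show ?thesis
    by (simp add: qact_def qtrunc_sum fun_eq_iff)
qed

lemma pcompose_power: "pcompose (p ^ n) q = pcompose p q ^ n"
  by (induction n) (simp_all add: pcompose_mult pcompose_1)

lemma pcompose_monom: "pcompose (monom c n) q = smult c (q ^ n)"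
  by (induction n) (simp_all add: monom_0 monom_Suc pcompose_pCons)

lemma poly_poly_as_sum_of_monoms:
  assumes "degree P < N" and "\<And>j. degree (coeff P j) < D"
  shows "P = (\<Sum>i<D. \<Sum>j<N. monom (monom (coeff (coeff P j) i) i) j)" (is "P = ?S")
proof (intro poly_eqI)
  fix j i
  have "coeff (coeff ?S j) i = (if i < D \<and> j < N then coeff (coeff P j) i else 0)"
    by (auto simp: coeff_sum if_distrib[of "\<lambda>p. coeff p i"] cong: if_cong)
  also have "\<dots> = coeff (coeff P j) i"
    using assms coeff_eq_0 by (metis coeff_0 leI order.strict_trans1)
  finally show "coeff (coeff P j) i = coeff (coeff ?S j) i" ..
qed

lemma qact_qtrunc:
  assumes "degree P < N"
  shows "qact N a (qtrunc N P) = qtrunc N (pcompose P (y_plus_ax a))"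
proof -
  obtain D where "N \<le> D" and D: "\<And>j. degree (coeff P j) < D"
  proof
    show "degree (coeff P j) < N + Suc (\<Sum>j\<le>degree P. degree (coeff P j))" for j
    proof (cases "j \<le> degree P")
      case True
      then show ?thesis
        using member_le_sum[of j "{..degree P}" "\<lambda>j. degree (coeff P j)"] by auto
    qed (simp add: coeff_eq_0)
  qed simp
  have "pcompose P (y_plus_ax a)
      = (\<Sum>i<D. \<Sum>j<N. smult (monom (coeff (coeff P j) i) i) (y_plus_ax a ^ j))"
    by (subst poly_poly_as_sum_of_monoms[OF assms D]) (simp add: pcompose_sum pcompose_monom)
  then have "qtrunc N (pcompose P (y_plus_ax a)) ij
      = (\<Sum>i<N. \<Sum>j<N. qtrunc N (smult (monom (coeff (coeff P j) i) i) (y_plus_ax a ^ j)) ij)" for ij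
    using \<open>N \<le> D\<close> by (simp add: qtrunc_sum qtrunc_smult_monom_eq_0 sum.mono_neutral_right)
  also have "\<dots> ij = qact N a (qtrunc N P) ij" for ij
    by (simp add: qact_eq_qtrunc_sum qtrunc_sum) (simp add: qtrunc_def)
  finally show ?thesis
    by auto
qed

lemma qact_qadd: "qact N a (qadd f g) = qadd (qact N a f) (qact N a g)"
  by (simp add: qact_def qadd_def distrib_right sum.distrib)

lemma qact_qscale: "qact N a (qscale c f) = qscale c (qact N a f)"
  by (simp add: qact_def qscale_def sum_distrib_left mult.assoc)

lemma qact_qzero: "qact N a qzero = qzero"
  by (simp add: qact_def qzero_def)

definition qsubspace :: "(nat \<times> nat \<Rightarrow> 'a::comm_ring_1) set \<Rightarrow> bool" where
  "qsubspace S \<longleftrightarrow>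
     qzero \<in> S \<and> (\<forall>f\<in>S. \<forall>g\<in>S. qadd f g \<in> S) \<and> (\<forall>c. \<forall>f\<in>S. qscale c f \<in> S)"

lemma qsubspace_qinvariants: "qsubspace (qinvariants N)"
  unfolding qsubspace_def qinvariants_def
  by (auto simp: qact_qzero qact_qadd qact_qscale) (auto simp: qcarrier_def qzero_def qadd_def qscale_def)

lemma qsubspace_diff:
  assumes "qsubspace S" "f \<in> S" "g \<in> S"
  shows "(\<lambda>ij. f ij - g ij) \<in> S"
proof -
  have "(\<lambda>ij. f ij - g ij) = qadd f (qscale (- 1) g)"
    by (simp add: qadd_def qscale_def)
  then show ?thesis
    using assms by (simp add: qsubspace_def)
qed

lemma qlincomb_in_qsubspace:
  assumes "qsubspace S" and "\<forall>t\<in>I. B t \<in> S"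
  shows "qlincomb I u B \<in> S"
proof (cases "finite I")
  case True
  then show ?thesis
    using assms(2)
  proof (induction I rule: finite_induct)
    case empty
    then show ?case
      using assms(1) by (simp add: qsubspace_def qlincomb_def qzero_def)
  next
    case (insert t I)
    have "qlincomb (insert t I) u B = qadd (qscale (u t) (B t)) (qlincomb I u B)"
      using insert.hyps by (simp add: qlincomb_def qadd_def qscale_def)
    then show ?case
      using insert assms(1) by (simp add: qsubspace_def)
  qed
next
  case False
  then show ?thesis
    using assms(1) by (simp add: qsubspace_def qlincomb_def qzero_def)
qed

section \<open>Finite fields and binomial coefficients\<close>

lemma of_nat_card_eq_0: "of_nat (card (UNIV :: 'a set)) = (0::'a::{comm_ring_1,finite})"
proof -
  have "(\<Sum>x\<in>UNIV. x) = (\<Sum>x\<in>UNIV. x + (1::'a))"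
    by (rule sum.reindex_bij_witness[of _ "\<lambda>y. y + 1" "\<lambda>y. y - 1"]) auto
  then show ?thesis
    by (simp add: sum.distrib)
qed

lemma CHAR_eq_if_card_eq_prime_power:
  assumes "prime p" and "card (UNIV :: 'a set) = p ^ k"
  shows "CHAR('a::{field,finite}) = p"
proof -
  have "prime CHAR('a)"
    by (intro prime_CHAR_semidom finite_imp_CHAR_pos) simp
  moreover have "CHAR('a) dvd p ^ k"
    using of_nat_card_eq_0[where 'a='a] assms(2) of_nat_eq_0_iff_char_dvd by metis
  ultimately show ?thesis
    using assms(1) prime_dvd_power primes_dvd_imp_eq by blast
qed

text \<open>The library's \<open>finite_field_power_card_eq_same\<close> needs the sort \<open>finite_field\<close>,
  which \<open>{field,finite}\<close> does not provide.\<close>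

lemma field_power_card_eq_self:
  fixes x :: "'a::{field,finite}"
  shows "x ^ card (UNIV :: 'a set) = x"
proof (cases "x = 0")
  case False
  let ?U = "UNIV - {0::'a}"
  have "bij_betw ((*) x) ?U ?U"
    using False by (intro bij_betwI[where g="\<lambda>y. y / x"]) auto
  then have "(\<Prod>y\<in>?U. x * y) = (\<Prod>y\<in>?U. y)"
    by (rule prod.reindex_bij_betw)
  moreover have "(\<Prod>y\<in>?U. y) \<noteq> 0"
    by simp
  ultimately have "x ^ card ?U = 1"
    by (simp add: prod.distrib)
  moreover have "card (UNIV :: 'a set) = Suc (card ?U)"
    using card_Suc_Diff1[of "UNIV :: 'a set" 0] by simp
  ultimately show ?thesis
    by (simp only: power_Suc mult_1_right)
qed (simp add: finite_UNIV_card_ge_0)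

lemma coeff_monom_plus_1_power:
  assumes "0 < d"
  shows "coeff ((monom (1::'a::comm_ring_1) d + 1) ^ n) (d * k) = of_nat (n choose k)"
proof -
  have "(monom (1::'a) d + 1) ^ n = (\<Sum>l\<le>n. monom (of_nat (n choose l)) (d * l))"
    by (simp add: binomial_ring monom_power of_nat_monom mult_monom mult.commute)
  then show ?thesis
    using assms by (simp add: coeff_sum binomial_eq_0)
qed

text \<open>A special case of Lucas' theorem.\<close>

lemma of_nat_choose_multiplicity_neq_0:
  assumes "prime p" and "CHAR('a::comm_ring_1) = p" and "0 < j"
  shows "of_nat (j choose p ^ multiplicity p j) \<noteq> (0::'a)"
proof -
  define d where "d = p ^ multiplicity p j"
  obtain j' where j: "j = d * j'" and "\<not> p dvd j'"
    using multiplicity_decompose'[of j p] assms(1,3) unfolding d_def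
    by (metis not_prime_unit not_gr0)
  have "0 < d"
    using assms(1) by (simp add: d_def prime_gt_0_nat)
  have "(monom (1::'a) 1 + 1) ^ d = monom 1 d + 1"
    using freshmans_dream'[where x="monom (1::'a) 1" and y=1 and n="multiplicity p j"] assms(1,2)
    by (simp add: d_def monom_power)
  then have "(monom (1::'a) 1 + 1) ^ j = (monom 1 d + 1) ^ j'"
    by (simp add: j power_mult)
  have "of_nat (j choose d) = coeff ((monom (1::'a) 1 + 1) ^ j) (1 * d)"
    by (rule coeff_monom_plus_1_power[symmetric]) simp
  also have "\<dots> = coeff ((monom 1 d + 1) ^ j') (d * 1)"
    using \<open>(monom 1 1 + 1) ^ j = (monom 1 d + 1) ^ j'\<close> by simp
  also have "\<dots> = of_nat (j' choose 1)"
    by (rule coeff_monom_plus_1_power[OF \<open>0 < d\<close>])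
  also have "\<dots> \<noteq> 0"
    using \<open>\<not> p dvd j'\<close> assms(2) by (simp add: of_nat_eq_0_iff_char_dvd)
  finally show ?thesis
    by (simp add: d_def)
qed

lemma card_field_ge_2: "2 \<le> card (UNIV :: 'a::{field,finite} set)"
proof -
  have "card {0::'a, 1} \<le> card (UNIV :: 'a set)"
    by (rule card_mono) auto
  then show ?thesis
    by simp
qed

section \<open>Invariance of the two families\<close>

lemma y_plus_ax_power_prime_power:
  assumes "prime p" and "CHAR('a::comm_ring_1) = p"
  shows "y_plus_ax (a::'a) ^ p ^ n = monom 1 (p ^ n) + [:monom (a ^ p ^ n) (p ^ n):]"
  using freshmans_dream'[where x="monom 1 1" and y="[:monom a 1:]" and n=n] assms
  by (simp add: y_plus_ax_eq monom_power flip: monom_0)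

lemma power_add_eq_power_plus_mult:
  obtains r where "(a + b) ^ n = a ^ n + b * (r::'a::comm_ring_1)"
proof
  show "(a + b) ^ n = a ^ n + b * (\<Sum>i<n. a ^ (n - Suc i) * (a + b) ^ i)"
    using power_diff_sumr2[of "a + b" n a] by (simp add: diff_eq_eq add.commute)
qed

lemma qact_qmono:
  assumes "prime p" and "CHAR('a::comm_ring_1) = p"
    and "j < N" and "N \<le> i + p ^ multiplicity p j"
  shows "qact N c (qmono N i j) = (qmono N i j :: nat \<times> nat \<Rightarrow> 'a)"
proof -
  define d where "d = p ^ multiplicity p j"
  obtain j' where j: "j = d * j'"
    using multiplicity_dvd[of p j] by (auto simp: d_def)
  have "y_plus_ax c ^ d = monom 1 d + [:monom (c ^ d) d:]"
    unfolding d_def by (rule y_plus_ax_power_prime_power[OF assms(1,2)])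
  then have "y_plus_ax c ^ j = (monom 1 d + [:monom (c ^ d) d:]) ^ j'"
    by (simp only: j power_mult)
  moreover obtain R where "(monom 1 d + [:monom (c ^ d) d:]) ^ j' = monom 1 d ^ j' + [:monom (c ^ d) d:] * R"
    by (rule power_add_eq_power_plus_mult)
  ultimately have "y_plus_ax c ^ j = monom 1 j + [:monom (c ^ d) d:] * R"
    by (simp add: j monom_power mult.commute)
  then have "pcompose (monom (monom 1 i) j) (y_plus_ax c)
      = monom (monom 1 i) j + smult (monom (c ^ d) (i + d)) R"
    by (simp add: pcompose_monom mult_monom smult_add_right smult_monom)
  moreover have "degree (monom (monom (1::'a) i) j) < N"
    using assms(3) by (simp add: degree_monom_eq)
  moreover have "N \<le> i + d"
    using assms(4) by (simp add: d_def)
  ultimately show ?thesis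
    by (simp add: qmono_eq_qtrunc qact_qtrunc fun_eq_iff qtrunc_add qtrunc_smult_monom_eq_0)
qed

definition V2_poly :: "nat \<Rightarrow> 'a::comm_ring_1 poly poly" where
  "V2_poly q = monom 1 q - monom (monom 1 (q - 1)) 1"

lemma qV2_eq_qtrunc: "qV2 N q = qtrunc N (V2_poly q)"
proof -
  have "monom 1 1 ^ q + smult [:- 1:] (monom 1 1 * [:monom 1 (q - 1):]) = (V2_poly q :: 'a poly poly)"
    by (simp add: V2_poly_def monom_power monom_0 mult_monom smult_monom flip: minus_monom)
  then show ?thesis
    unfolding qV2_def qY_eq_qtrunc qX_pow_eq_qtrunc qpow_qtrunc qmul_qtrunc qscale_qtrunc
      qadd_qtrunc by simp
qed

lemma pcompose_V2_poly:
  assumes "prime p" and "CHAR('a::comm_ring_1) = p" and "q = p ^ k" and "(c::'a) ^ q = c"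
  shows "pcompose (V2_poly q) (y_plus_ax c) = V2_poly q"
proof -
  have "0 < q"
    using assms(1,3) by (simp add: prime_gt_0_nat)
  then have "smult (monom 1 (q - 1)) (y_plus_ax c) = monom (monom 1 (q - 1)) 1 + [:monom c q:]"
    by (simp add: y_plus_ax_eq smult_monom mult_monom smult_add_right)
  moreover have "y_plus_ax c ^ q = monom 1 q + [:monom c q:]"
    using y_plus_ax_power_prime_power[OF assms(1,2), of c k] assms(3,4) by simp
  ultimately show ?thesis
    by (simp add: V2_poly_def pcompose_diff pcompose_monom)
qed

lemma coeff_V2_poly:
  "coeff (V2_poly q) n = (if n = q then 1 else 0) - (if n = 1 then monom 1 (q - 1) else 0)"
  by (simp add: V2_poly_def)

lemma degree_V2_poly: "2 \<le> q \<Longrightarrow> degree (V2_poly q) = q"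
  by (intro antisym degree_le le_degree) (auto simp: coeff_V2_poly)

lemma lead_coeff_V2_poly: "2 \<le> q \<Longrightarrow> lead_coeff (V2_poly q) = 1"
  by (simp add: degree_V2_poly coeff_V2_poly)

lemma degree_V2_poly_power: "2 \<le> q \<Longrightarrow> degree (V2_poly q ^ b :: 'a::idom poly poly) = q * b"
proof -
  assume "2 \<le> q"
  then have "V2_poly q \<noteq> (0 :: 'a poly poly)"
    using lead_coeff_V2_poly[where 'a='a, of q] by force
  then show ?thesis
    using \<open>2 \<le> q\<close> by (simp add: degree_power_eq degree_V2_poly)
qed

lemma lead_coeff_V2_poly_power: "2 \<le> q \<Longrightarrow> lead_coeff (V2_poly q ^ b :: 'a::idom poly poly) = 1"
  by (simp add: lead_coeff_power lead_coeff_V2_poly)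

section \<open>Top rows of invariants\<close>

lemma y_plus_ax_power:
  "y_plus_ax a ^ n = (\<Sum>l\<le>n. monom (monom (of_nat (n choose l) * a ^ (n - l)) (n - l)) l)"
proof -
  have "monom (1::'a poly) 1 ^ l * [:monom a 1:] ^ (n - l) = monom (monom (a ^ (n - l)) (n - l)) l"
    for l
    by (simp add: monom_power mult_monom flip: monom_0)
  then show ?thesis
    by (simp add: y_plus_ax_eq binomial_ring mult.assoc of_nat_monom mult_monom smult_monom
        add.commute[of "monom 1 1"])
qed

lemma coeff_smult_monom_y_plus_ax_power:
  "coeff (coeff (smult (monom c i) (y_plus_ax a ^ n)) l) s
     = (if l \<le> n \<and> s = i + (n - l) then c * of_nat (n choose l) * a ^ (n - l) else 0)"
  by (auto simp: y_plus_ax_power coeff_sum coeff_monom_mult if_distrib[of "\<lambda>p. coeff p s"]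
      cong: if_cong)

definition qact_coeff_poly :: "nat \<Rightarrow> (nat \<times> nat \<Rightarrow> 'a::comm_ring_1) \<Rightarrow> nat \<Rightarrow> nat \<Rightarrow> 'a poly" where
  "qact_coeff_poly N f s l = (\<Sum>i<N. \<Sum>j<N. if l \<le> j \<and> s = i + (j - l)
     then monom (f (i, j) * of_nat (j choose l)) (j - l) else 0)"

lemma poly_qact_coeff_poly:
  assumes "s < N" and "l < N"
  shows "poly (qact_coeff_poly N f s l) a = qact N a f (s, l)"
  using assms unfolding qact_eq_qtrunc_sum qtrunc_sum qact_coeff_poly_def
  by (simp add: poly_sum qtrunc_def coeff_smult_monom_y_plus_ax_power poly_monom mult.assoc
      if_distrib[of "\<lambda>p. poly p a"] del: coeff_smult cong: if_cong)

lemma coeff_qact_coeff_poly: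
  "coeff (qact_coeff_poly N f s l) n = (\<Sum>i<N. \<Sum>j<N.
     if l \<le> j \<and> s = i + (j - l) \<and> j - l = n then f (i, j) * of_nat (j choose l) else 0)"
  unfolding qact_coeff_poly_def coeff_sum by (intro sum.cong refl) simp

lemma degree_qact_coeff_poly_le:
  assumes "\<And>i' j'. J < j' \<Longrightarrow> f (i', j') = 0"
  shows "degree (qact_coeff_poly N f s l) \<le> J - l"
proof (rule degree_le, intro allI impI)
  fix n
  assume "J - l < n"
  then have "J < j" if "j - l = n" and "l \<le> j" for j
    using that by linarith
  then show "coeff (qact_coeff_poly N f s l) n = 0"
    using assms by (auto simp: coeff_qact_coeff_poly intro!: sum.neutral)
qed

lemma coeff_qact_coeff_poly_top:
  assumes "d \<le> j" and "i < N" and "j < N"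
  shows "coeff (qact_coeff_poly N f (i + d) (j - d)) d = f (i, j) * of_nat (j choose d)"
proof -
  have "(j - d \<le> j' \<and> i + d = i' + (j' - (j - d)) \<and> j' - (j - d) = d) \<longleftrightarrow> (i' = i \<and> j' = j)"
    for i' j'
    using assms(1) by auto
  then have "coeff (qact_coeff_poly N f (i + d) (j - d)) d = (\<Sum>i'<N. \<Sum>j'<N.
      if j' = j then if i' = i then f (i, j) * of_nat (j choose (j - d)) else 0 else 0)"
    unfolding coeff_qact_coeff_poly by (intro sum.cong refl) auto
  also have "\<dots> = f (i, j) * of_nat (j choose d)"
    using assms by (simp add: sum.delta binomial_symmetric[symmetric])
  finally show ?thesis .
qed

lemma qinvariant_coeff_eq_0:
  fixes f :: "nat \<times> nat \<Rightarrow> 'a::{field,finite}"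
  assumes "\<And>a. qact N a f = f" and "\<And>i' j'. j < j' \<Longrightarrow> f (i', j') = 0"
    and "0 < d" and "d \<le> j" and "j < N" and "i + d < N" and "d < card (UNIV :: 'a set)"
    and "of_nat (j choose d) \<noteq> (0::'a)"
  shows "f (i, j) = 0"
proof -
  let ?\<Phi> = "qact_coeff_poly N f (i + d) (j - d)"
  have "?\<Phi> = [:f (i + d, j - d):]"
  proof (rule poly_eqI_degree[of UNIV])
    show "poly ?\<Phi> a = poly [:f (i + d, j - d):] a" for a
      using poly_qact_coeff_poly[where s = "i + d" and l = "j - d" and f = f and a = a] assms(1,5,6)
      by simp
    show "degree ?\<Phi> < card (UNIV :: 'a set)"
      using degree_qact_coeff_poly_le[where J = j and f = f and N = N and s = "i + d" and l = "j - d",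
        OF assms(2)]
        assms(4,7) by simp
  qed (use assms(3,7) in simp)
  then have "f (i, j) * of_nat (j choose d) = coeff [:f (i + d, j - d):] d"
    using coeff_qact_coeff_poly_top[where f = f and i = i, OF assms(4) _ assms(5)] assms(6)
    by simp
  also have "\<dots> = 0"
    using assms(3) by (cases d) simp_all
  finally show ?thesis
    using assms(8) by simp
qed

section \<open>Triangular families\<close>

definition top_row_monomial :: "(nat \<times> nat \<Rightarrow> 'a::zero_neq_one) \<Rightarrow> nat \<times> nat \<Rightarrow> bool" where
  "top_row_monomial f ij \<longleftrightarrow> f ij = 1 \<and>
     (\<forall>i' j'. snd ij < j' \<or> (j' = snd ij \<and> i' \<noteq> fst ij) \<longrightarrow> f (i', j') = 0)"

lemma top_row_monomial_eq:
  assumes "top_row_monomial f ij" and "snd ij \<le> snd ij'"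
  shows "f ij' = (if ij' = ij then 1 else 0)"
  using assms by (cases ij, cases ij') (fastforce simp: top_row_monomial_def le_less)

lemma triangular_linear_independent:
  assumes "finite I" and "inj_on lead I" and top: "\<And>t. t \<in> I \<Longrightarrow> top_row_monomial (B t) (lead t)"
    and "qlincomb I u B = qzero" and "t \<in> I"
  shows "u t = 0"
proof (rule ccontr)
  assume "u t \<noteq> 0"
  define T where "T = {t\<in>I. u t \<noteq> 0}"
  have "finite T" and "T \<noteq> {}"
    using assms(1,5) \<open>u t \<noteq> 0\<close> by (auto simp: T_def)
  then have "Max ((\<lambda>t. snd (lead t)) ` T) \<in> (\<lambda>t. snd (lead t)) ` T"
    by (intro Max_in) auto
  then obtain t0 where "t0 \<in> T" and "snd (lead t0) = Max ((\<lambda>t. snd (lead t)) ` T)"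
    by auto
  then have max: "snd (lead t) \<le> snd (lead t0)" if "t \<in> T" for t
    using \<open>finite T\<close> that by simp
  have "0 = qlincomb I u B (lead t0)"
    using assms(4) by (simp add: qzero_def)
  also have "\<dots> = (\<Sum>t\<in>I. if t = t0 then u t0 else 0)"
    unfolding qlincomb_def
  proof (rule sum.cong[OF refl])
    fix t
    assume "t \<in> I"
    show "u t * B t (lead t0) = (if t = t0 then u t0 else 0)"
    proof (cases "t \<in> T")
      case True
      then have "B t (lead t0) = (if t = t0 then 1 else 0)"
        using top_row_monomial_eq[OF top[OF \<open>t \<in> I\<close>]] \<open>t0 \<in> T\<close> max assms(2)
        by (auto simp: T_def inj_on_def)
      then show ?thesis
        by simp
    qed (use \<open>t0 \<in> T\<close> \<open>t \<in> I\<close> in \<open>auto simp: T_def\<close>)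
  qed
  also have "\<dots> = u t0"
    using assms(1) \<open>t0 \<in> T\<close> by (simp add: T_def)
  finally show False
    using \<open>t0 \<in> T\<close> by (simp add: T_def)
qed

lemma triangular_row_reduction:
  assumes "finite I" and "inj_on lead I" and top: "\<And>t. t \<in> I \<Longrightarrow> top_row_monomial (B t) (lead t)"
    and above: "\<And>i' j'. J < j' \<Longrightarrow> f (i', j') = 0"
    and covered: "\<And>i'. f (i', J) \<noteq> 0 \<Longrightarrow> (i', J) \<in> lead ` I"
    and "J \<le> j"
  shows "qlincomb I (\<lambda>t. if snd (lead t) = J then f (lead t) else 0) B (i, j) = f (i, j)"
proof -
  have "(if snd (lead t) = J then f (lead t) else 0) * B t (i, j)
      = (if lead t = (i, j) then if j = J then f (i, j) else 0 else 0)" if "t \<in> I" for t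
  proof (cases "snd (lead t) = J")
    case row: True
    then have B: "B t (i, j) = (if (i, j) = lead t then 1 else 0)"
      using top_row_monomial_eq[OF top[OF that], of "(i, j)"] \<open>J \<le> j\<close> by simp
    show ?thesis
    proof (cases "lead t = (i, j)")
      case True
      then show ?thesis
        using row B by simp
    qed (use row B in auto)
  qed auto
  then have "qlincomb I (\<lambda>t. if snd (lead t) = J then f (lead t) else 0) B (i, j)
      = (\<Sum>t\<in>I. if lead t = (i, j) then if j = J then f (i, j) else 0 else 0)"
    by (simp add: qlincomb_def)
  also have "\<dots> = (\<Sum>x\<in>lead ` I. if x = (i, j) then if j = J then f (i, j) else 0 else 0)"
    using assms(2) by (simp add: sum.reindex)
  also have "\<dots> = (if (i, j) \<in> lead ` I then if j = J then f (i, j) else 0 else 0)"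
    using assms(1) by (simp add: sum.delta')
  also have "\<dots> = f (i, j)"
    using above covered \<open>J \<le> j\<close> by (cases "j = J") auto
  finally show ?thesis .
qed

lemma triangular_spanning:
  assumes "finite I" and "inj_on lead I" and "\<And>t. t \<in> I \<Longrightarrow> top_row_monomial (B t) (lead t)"
    and "qsubspace S" and "\<And>t. t \<in> I \<Longrightarrow> B t \<in> S"
    and bounded: "\<And>f i j. f \<in> S \<Longrightarrow> N \<le> j \<Longrightarrow> f (i, j) = 0"
    and covered: "\<And>f i J. f \<in> S \<Longrightarrow> f (i, J) \<noteq> 0 \<Longrightarrow> \<forall>i' j'. J < j' \<longrightarrow> f (i', j') = 0
                     \<Longrightarrow> (i, J) \<in> lead ` I"
    and "f \<in> S"
  shows "\<exists>u. f = qlincomb I u B"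
proof -
  have "\<forall>f\<in>S. (\<forall>i j. J \<le> j \<longrightarrow> f (i, j) = 0) \<longrightarrow> (\<exists>u. f = qlincomb I u B)" for J
  proof (induction J)
    case 0
    have "f = qlincomb I (\<lambda>_. 0) B" if "\<forall>i j. f (i, j) = 0" for f
      using that by (auto simp: qlincomb_def)
    then show ?case
      by auto
  next
    case (Suc J)
    show ?case
    proof (intro ballI impI)
      fix f
      assume "f \<in> S" and vanish: "\<forall>i j. Suc J \<le> j \<longrightarrow> f (i, j) = 0"
      define u where "u = (\<lambda>t. if snd (lead t) = J then f (lead t) else 0)"
      define g where "g = (\<lambda>ij. f ij - qlincomb I u B ij)"
      have "g \<in> S"
        unfolding g_def using assms(4,5) \<open>f \<in> S\<close> by (intro qsubspace_diff qlincomb_in_qsubspace) auto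
      moreover have "\<forall>i j. J \<le> j \<longrightarrow> g (i, j) = 0"
        using triangular_row_reduction[OF assms(1-3), of J f] covered[OF \<open>f \<in> S\<close>] vanish
        by (simp add: g_def u_def Suc_le_eq)
      ultimately obtain w where "g = qlincomb I w B"
        using Suc.IH by blast
      then have "f = qlincomb I (\<lambda>t. u t + w t) B"
        by (auto simp: g_def qlincomb_def distrib_right sum.distrib fun_eq_iff algebra_simps)
      then show "\<exists>u. f = qlincomb I u B"
        by blast
    qed
  qed
  then show ?thesis
    using bounded \<open>f \<in> S\<close> by blast
qed

lemma is_basis_of_triangular:
  assumes "finite I" and "inj_on lead I" and "\<And>t. t \<in> I \<Longrightarrow> top_row_monomial (B t) (lead t)"
    and "qsubspace S" and "\<And>t. t \<in> I \<Longrightarrow> B t \<in> S"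
    and "\<And>f i j. f \<in> S \<Longrightarrow> N \<le> j \<Longrightarrow> f (i, j) = 0"
    and "\<And>f i J. f \<in> S \<Longrightarrow> f (i, J) \<noteq> 0 \<Longrightarrow> \<forall>i' j'. J < j' \<longrightarrow> f (i', j') = 0
           \<Longrightarrow> (i, J) \<in> lead ` I"
  shows "is_basis_of I B S"
proof -
  have "\<exists>u. f = qlincomb I u B" if "f \<in> S" for f
    using assms that by (rule triangular_spanning)
  then show ?thesis
    unfolding is_basis_of_def
    using assms(1,5) triangular_linear_independent[OF assms(1-3)] by auto
qed

section \<open>The basis of the invariants\<close>

lemma x_pow_V2_pow_eq_qtrunc:
  "qmul N (qpow N (qX N) a) (qpow N (qV2 N q) b) = qtrunc N (smult (monom 1 a) (V2_poly q ^ b))"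
  unfolding qX_pow_eq_qtrunc qV2_eq_qtrunc qpow_qtrunc qmul_qtrunc by simp

lemma top_row_monomial_qmono: "i < N \<Longrightarrow> j < N \<Longrightarrow> top_row_monomial (qmono N i j) (i, j)"
  by (auto simp: top_row_monomial_def qmono_def)

lemma top_row_monomial_x_pow_V2_pow:
  assumes "2 \<le> q" and "a < N" and "q * b < N"
  shows "top_row_monomial (qtrunc N (smult (monom 1 a) (V2_poly q ^ b) :: 'a::idom poly poly)) (a, q * b)"
proof -
  let ?P = "smult (monom 1 a) (V2_poly q ^ b) :: 'a poly poly"
  have "coeff ?P (q * b) = monom 1 a"
    using lead_coeff_V2_poly_power[where 'a='a, OF assms(1), of b]
      degree_V2_poly_power[where 'a='a, OF assms(1), of b]
    by simp
  moreover have "coeff ?P j = 0" if "q * b < j" for j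
    using that degree_V2_poly_power[where 'a='a, OF assms(1), of b] by (simp add: coeff_eq_0)
  ultimately show ?thesis
    using assms(2,3) by (auto simp: top_row_monomial_def qtrunc_def)
qed

lemma qmono_in_qinvariants:
  assumes "prime p" and "CHAR('a::comm_ring_1) = p"
    and "j < N" and "N \<le> i + p ^ multiplicity p j"
  shows "(qmono N i j :: nat \<times> nat \<Rightarrow> 'a) \<in> qinvariants N"
  using qact_qmono[OF assms] by (auto simp: qinvariants_def qmono_eq_qtrunc qtrunc_in_qcarrier)

lemma x_pow_V2_pow_in_qinvariants:
  assumes "prime p" and "card (UNIV :: 'a set) = p ^ k" and "p ^ k * b < N"
  shows "qtrunc N (smult (monom 1 a) (V2_poly (p ^ k) ^ b))
           \<in> (qinvariants N :: (nat \<times> nat \<Rightarrow> 'a::{field,finite}) set)"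
proof -
  let ?P = "smult (monom 1 a) (V2_poly (p ^ k) ^ b) :: 'a poly poly"
  have "2 \<le> p ^ k"
    using card_field_ge_2[where 'a='a] assms(2) by simp
  then have "degree ?P < N"
    using degree_V2_poly_power[where 'a='a, of "p ^ k" b] assms(3) by simp
  moreover have "pcompose ?P (y_plus_ax c) = ?P" for c :: 'a
    using pcompose_V2_poly[OF assms(1) CHAR_eq_if_card_eq_prime_power[OF assms(1,2)], of "p ^ k" k c]
      field_power_card_eq_self[of c] assms(2)
    by (simp add: pcompose_smult pcompose_power)
  ultimately show ?thesis
    by (simp add: qinvariants_def qact_qtrunc qtrunc_in_qcarrier)
qed

definition basis_index :: "nat \<Rightarrow> nat \<Rightarrow> nat \<Rightarrow> (nat \<times> nat + nat \<times> nat) set" where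
  "basis_index p q N =
     Inl ` {(i, j). i < N \<and> j < N \<and> \<not> q dvd j \<and> N \<le> i + p ^ multiplicity p j}
     \<union> Inr ` {(a, b). a < N \<and> q * b < N}"

definition basis_family :: "nat \<Rightarrow> nat \<Rightarrow> nat \<times> nat + nat \<times> nat \<Rightarrow> nat \<times> nat \<Rightarrow> 'a::comm_ring_1" where
  "basis_family N q = (\<lambda>t. case t of
      Inl (i, j) \<Rightarrow> qmono N i j
    | Inr (a, b) \<Rightarrow> qmul N (qpow N (qX N) a) (qpow N (qV2 N q) b))"

definition basis_lead :: "nat \<Rightarrow> nat \<times> nat + nat \<times> nat \<Rightarrow> nat \<times> nat" where
  "basis_lead q t = (case t of Inl ij \<Rightarrow> ij | Inr (a, b) \<Rightarrow> (a, q * b))"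

lemma finite_basis_index:
  assumes "0 < q"
  shows "finite (basis_index p q N)"
proof -
  have "b < N" if "q * b < N" for b
    using assms that by (metis le_less_trans mult_le_mono1 mult_1 Suc_leI One_nat_def)
  then have "basis_index p q N \<subseteq> Inl ` ({..<N} \<times> {..<N}) \<union> Inr ` ({..<N} \<times> {..<N})"
    by (auto simp: basis_index_def)
  then show ?thesis
    by (rule finite_subset) simp
qed

lemma inj_on_basis_lead: "0 < q \<Longrightarrow> inj_on (basis_lead q) (basis_index p q N)"
  by (auto simp: inj_on_def basis_index_def basis_lead_def)

lemma prime_power_multiplicity_less:
  fixes p :: nat
  assumes "prime p" and "\<not> p ^ k dvd j"
  shows "p ^ multiplicity p j < p ^ k"
proof -
  have "multiplicity p j < k"
    using assms(2) multiplicity_dvd'[of k p j] by (meson not_le)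
  then show ?thesis
    using prime_gt_1_nat[OF assms(1)] by (rule power_strict_increasing)
qed

lemma qinvariant_top_row_exponent_bound:
  fixes f :: "nat \<times> nat \<Rightarrow> 'a::{field,finite}"
  assumes "prime p" and "card (UNIV :: 'a set) = p ^ k" and "f \<in> qinvariants N"
    and "\<forall>i' j'. J < j' \<longrightarrow> f (i', j') = 0" and "\<not> p ^ k dvd J" and "f (i, J) \<noteq> 0"
  shows "N \<le> i + p ^ multiplicity p J"
proof (rule ccontr)
  define d where "d = p ^ multiplicity p J"
  assume "\<not> N \<le> i + p ^ multiplicity p J"
  then have "i + d < N"
    by (simp add: d_def)
  have "0 < J"
    using assms(5) by (intro gr0I) auto
  have "J < N"
    using assms(3,6) by (auto simp: qinvariants_def qcarrier_def not_less[symmetric])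
  have "f (i, J) = 0"
  proof (rule qinvariant_coeff_eq_0[of N f J d])
    show "0 < d" and "d \<le> J"
      using assms(1) \<open>0 < J\<close> by (auto simp: d_def prime_gt_0_nat multiplicity_dvd intro: dvd_imp_le)
    show "d < card (UNIV :: 'a set)"
      using prime_power_multiplicity_less[OF assms(1,5)] assms(2) by (simp add: d_def)
    show "of_nat (J choose d) \<noteq> (0::'a)"
      using of_nat_choose_multiplicity_neq_0[OF assms(1)
          CHAR_eq_if_card_eq_prime_power[OF assms(1,2)] \<open>0 < J\<close>] by (simp add: d_def)
  qed (use assms(3,4) \<open>i + d < N\<close> \<open>J < N\<close> in \<open>auto simp: qinvariants_def\<close>)
  with assms(6) show False ..
qed

lemma qinvariants_top_row_covered:
  fixes f :: "nat \<times> nat \<Rightarrow> 'a::{field,finite}"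
  assumes "prime p" and "card (UNIV :: 'a set) = p ^ k" and "f \<in> qinvariants N"
    and "f (i, J) \<noteq> 0" and "\<forall>i' j'. J < j' \<longrightarrow> f (i', j') = 0"
  shows "(i, J) \<in> basis_lead (p ^ k) ` basis_index p (p ^ k) N"
proof -
  have "i < N" and "J < N"
    using assms(3,4) by (auto simp: qinvariants_def qcarrier_def not_less[symmetric])
  show ?thesis
  proof (cases "p ^ k dvd J")
    case True
    then obtain b where "J = p ^ k * b"
      by blast
    then have "Inr (i, b) \<in> basis_index p (p ^ k) N"
      using \<open>i < N\<close> \<open>J < N\<close> by (simp add: basis_index_def)
    then show ?thesis
      by (rule rev_image_eqI) (simp add: basis_lead_def \<open>J = p ^ k * b\<close>)
  next
    case False
    then have "Inl (i, J) \<in> basis_index p (p ^ k) N"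
      using qinvariant_top_row_exponent_bound[OF assms(1-3,5) False assms(4)] \<open>i < N\<close> \<open>J < N\<close>
      by (simp add: basis_index_def)
    then show ?thesis
      by (rule rev_image_eqI) (simp add: basis_lead_def)
  qed
qed

lemma basis_family_in_qinvariants:
  assumes "prime p" and "card (UNIV :: 'a set) = p ^ k" and "t \<in> basis_index p (p ^ k) N"
  shows "basis_family N (p ^ k) t \<in> (qinvariants N :: (nat \<times> nat \<Rightarrow> 'a::{field,finite}) set)"
proof -
  from assms(3) consider (mono) i j where "t = Inl (i, j)" and "j < N" and "N \<le> i + p ^ multiplicity p j"
    | (x_V2) a b where "t = Inr (a, b)" and "p ^ k * b < N"
    by (auto simp: basis_index_def)
  then show ?thesis
  proof cases
    case mono
    then show ?thesis
      using qmono_in_qinvariants[OF assms(1) CHAR_eq_if_card_eq_prime_power[OF assms(1,2)]]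
      by (simp add: basis_family_def)
  next
    case x_V2
    then have "(basis_family N (p ^ k) t :: nat \<times> nat \<Rightarrow> 'a)
        = qtrunc N (smult (monom 1 a) (V2_poly (p ^ k) ^ b))"
      unfolding basis_family_def by (simp only: sum.case prod.case x_pow_V2_pow_eq_qtrunc)
    then show ?thesis
      using x_pow_V2_pow_in_qinvariants[OF assms(1,2) x_V2(2)] by simp
  qed
qed

lemma top_row_monomial_basis_family:
  assumes "2 \<le> q" and "t \<in> basis_index p q N"
  shows "top_row_monomial (basis_family N q t :: nat \<times> nat \<Rightarrow> 'a::idom) (basis_lead q t)"
proof -
  from assms(2) consider (mono) i j where "t = Inl (i, j)" and "i < N" and "j < N"
    | (x_V2) a b where "t = Inr (a, b)" and "a < N" and "q * b < N"
    by (auto simp: basis_index_def)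
  then show ?thesis
  proof cases
    case mono
    then show ?thesis
      by (simp add: basis_family_def basis_lead_def top_row_monomial_qmono)
  next
    case x_V2
    then have "(basis_family N q t :: nat \<times> nat \<Rightarrow> 'a) = qtrunc N (smult (monom 1 a) (V2_poly q ^ b))"
      unfolding basis_family_def by (simp only: sum.case prod.case x_pow_V2_pow_eq_qtrunc)
    then show ?thesis
      using x_V2 top_row_monomial_x_pow_V2_pow[where 'a='a, OF assms(1)]
      by (simp add: basis_lead_def)
  qed
qed

lemma qinvariants_vanish_above: "f \<in> qinvariants N \<Longrightarrow> N \<le> j \<Longrightarrow> f (i, j) = 0"
  by (simp add: qinvariants_def qcarrier_def)

theorem qinvariants_basis:
  assumes "prime p" and "card (UNIV :: 'a set) = p ^ k"
  shows "is_basis_of (basis_index p (p ^ k) N) (basis_family N (p ^ k))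
           (qinvariants N :: (nat \<times> nat \<Rightarrow> 'a::{field,finite}) set)"
proof -
  have "2 \<le> p ^ k"
    using card_field_ge_2[where 'a='a] assms(2) by simp
  then have "0 < p ^ k"
    by linarith
  show ?thesis
    by (rule is_basis_of_triangular[where lead = "basis_lead (p ^ k)" and N = N])
      (use \<open>2 \<le> p ^ k\<close> \<open>0 < p ^ k\<close> in \<open>simp_all add: finite_basis_index inj_on_basis_lead
        top_row_monomial_basis_family qsubspace_qinvariants basis_family_in_qinvariants[OF assms]
        qinvariants_vanish_above qinvariants_top_row_covered[OF assms]\<close>)
qed

lemma basis_index_power_eq:
  assumes "0 < q"
  shows "basis_index p q (q ^ m) =
     Inl ` {(i, j). i \<le> q ^ m - 1 \<and> j \<le> q ^ m - 1 \<and> \<not> q dvd j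
                    \<and> i + p ^ multiplicity p j \<ge> q ^ m}
      \<union> Inr ` {(a, b). a \<le> q ^ m - 1 \<and> b \<le> q ^ (m - 1) - 1}"
proof -
  have le_pred: "x \<le> y - 1 \<longleftrightarrow> x < y" if "0 < y" for x y :: nat
    using that by linarith
  have below_power: "x \<le> q ^ m - 1 \<longleftrightarrow> x < q ^ m" for x
    by (rule le_pred) (use assms in simp)
  have V2_exponent: "b \<le> q ^ (m - 1) - 1 \<longleftrightarrow> q * b < q ^ m" for b
  proof -
    have "b \<le> q ^ (m - 1) - 1 \<longleftrightarrow> b < q ^ (m - 1)"
      by (rule le_pred) (use assms in simp)
    also have "\<dots> \<longleftrightarrow> q * b < q ^ m"
      using assms by (cases m) auto
    finally show ?thesis .
  qed
  show ?thesis
    unfolding below_power V2_exponent basis_index_def by auto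
qed

theorem mainTheorem12:
  fixes p k m q :: nat
  assumes "prime p" and "card (UNIV :: 'a set) = q" and "q = p ^ k" and "m \<ge> 1"
  shows "is_basis_of
     (Inl ` {(i, j). i \<le> q ^ m - 1 \<and> j \<le> q ^ m - 1 \<and> \<not> q dvd j
                    \<and> i + p ^ multiplicity p j \<ge> q ^ m}
      \<union> Inr ` {(a, b). a \<le> q ^ m - 1 \<and> b \<le> q ^ (m - 1) - 1})
     (\<lambda>t. case t of
        Inl (i, j) \<Rightarrow> qmono (q ^ m) i j
      | Inr (a, b) \<Rightarrow> qmul (q ^ m) (qpow (q ^ m) (qX (q ^ m)) a) (qpow (q ^ m) (qV2 (q ^ m) q) b))
     (qinvariants (q ^ m) :: (nat \<times> nat \<Rightarrow> 'a::{field,finite}) set)"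
proof -
  have "0 < q"
    using assms(2) finite_UNIV_card_ge_0[where 'a='a] by simp
  have "is_basis_of (basis_index p q (q ^ m)) (basis_family (q ^ m) q)
      (qinvariants (q ^ m) :: (nat \<times> nat \<Rightarrow> 'a) set)"
    using qinvariants_basis[OF assms(1)] assms(2,3) by simp
  then show ?thesis
    by (simp add: basis_index_power_eq[OF \<open>0 < q\<close>] basis_family_def)
qed

end
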